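(* Any quantum algorithm which takes an $n\times n$ permutation matrix as input (with oracle access to its entries) and outputs the sign of the permutation matrix has query complexity at least $\Omega(n^{3/2})$.
   Context: A permutation matrix is a Boolean $n\times n$ matrix with exactly one entry $1$ in each row and each column; its entries equal to $1$ are at positions $(i,\pi(i))$ for a permutation $\pi$, and its sign is the sign of $\pi$. *)

theory Defs
  imports "HOL-Combinatorics.Permutations" Complex_Main
begin

(* Standard quantum query model. The Hilbert space has orthonormal basis
  |i,j,b,w> with query register (i,j), i,j < n (an entry of the n x n input matrix),
  answer bit b < 2, and workspace w < W. *)

type_synonym qidx = "nat \<times> nat \<times> nat \<times> nat"
type_synonym qstate = "qidx \<Rightarrow> complex"
type_synonym qop = "qidx \<Rightarrow> qidx \<Rightarrow> complex"

definition qbasis :: "nat \<Rightarrow> nat \<Rightarrow> qidx set" where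
  "qbasis n W = {(i,j,b,w). i < n \<and> j < n \<and> b < 2 \<and> w < W}"

definition unitary_on :: "qidx set \<Rightarrow> qop \<Rightarrow> bool" where
  "unitary_on B U \<longleftrightarrow>
     (\<forall>k\<in>B. \<forall>l\<in>B. (\<Sum>r\<in>B. cnj (U r k) * U r l) = (if k = l then 1 else 0))"

definition apply_op :: "qidx set \<Rightarrow> qop \<Rightarrow> qstate \<Rightarrow> qstate" where
  "apply_op B U \<psi> = (\<lambda>k. if k \<in> B then (\<Sum>l\<in>B. U k l * \<psi> l) else 0)"

definition query_gate :: "nat \<Rightarrow> nat \<Rightarrow> (nat \<Rightarrow> nat \<Rightarrow> bool) \<Rightarrow> qstate \<Rightarrow> qstate" where
  "query_gate n W M \<psi> = (\<lambda>(i,j,b,w). if (i,j,b,w) \<in> qbasis n W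
       then \<psi> (i, j, if M i j then 1 - b else b, w) else 0)"

definition init_state :: qstate where
  "init_state = (\<lambda>k. if k = (0,0,0,0) then 1 else 0)"

fun run :: "nat \<Rightarrow> nat \<Rightarrow> (nat \<Rightarrow> qop) \<Rightarrow> (nat \<Rightarrow> nat \<Rightarrow> bool) \<Rightarrow> nat \<Rightarrow> qstate" where
  "run n W U M 0 = apply_op (qbasis n W) (U 0) init_state"
| "run n W U M (Suc t) = apply_op (qbasis n W) (U (Suc t)) (query_gate n W M (run n W U M t))"

definition prob_out :: "nat \<Rightarrow> nat \<Rightarrow> qstate \<Rightarrow> nat \<Rightarrow> real" where
  "prob_out n W \<psi> c = (\<Sum>k\<in>{k \<in> qbasis n W. fst (snd (snd k)) = c}. (cmod (\<psi> k))\<^sup>2)"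

definition perm_matrix :: "(nat \<Rightarrow> nat) \<Rightarrow> nat \<Rightarrow> nat \<Rightarrow> bool" where
  "perm_matrix \<pi> = (\<lambda>i j. \<pi> i = j)"

definition computes_sign :: "nat \<Rightarrow> nat \<Rightarrow> nat \<Rightarrow> (nat \<Rightarrow> qop) \<Rightarrow> bool" where
  "computes_sign n W T U \<longleftrightarrow> 1 \<le> W \<and> (\<forall>t\<le>T. unitary_on (qbasis n W) (U t)) \<and>
     (\<forall>\<pi>. \<pi> permutes {..<n} \<longrightarrow>
        prob_out n W (run n W U (perm_matrix \<pi>) T) (if sign \<pi> = (1::int) then 0 else 1) \<ge> 2/3)"

end

theory Submission
  imports Defs
begin

text \<open>Adversary argument. Let \<open>\<Phi>(t)\<close> be the sum, over all permutations x and all a, b < n, of the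
  real part of the overlap of the states reached after t queries on the inputs x and
  \<open>x \<circ> (a b)\<close>; for a \<noteq> b these inputs have opposite signs. Before the first query all states
  coincide, so \<open>\<Phi>(0) = n! n\<^sup>2\<close>. At the end, states of opposite sign are told apart with
  probability 2/3, so their overlap is at most 17/18 and \<open>\<Phi>(T) \<le> n! n (17 n + 1) / 18\<close>.
  Unitaries preserve overlaps, and a query on x versus \<open>x \<circ> (a b)\<close> only sees the four entries
  \<open>(a, x a), (a, x b), (b, x a), (b, x b)\<close>. Bounding each of them by AM-GM with weight
  \<open>1/\<surd>n\<close> on the 1-entries of x and \<open>\<surd>n\<close> on its 0-entries shows that one query lowers \<open>\<Phi>\<close> by at
  most \<open>8 \<surd>n n!\<close>. Hence \<open>T \<ge> n (n - 1) / (144 \<surd>n)\<close>.\<close>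

definition qinner :: "nat \<Rightarrow> nat \<Rightarrow> qstate \<Rightarrow> qstate \<Rightarrow> complex" where
  "qinner n W \<psi> \<phi> = (\<Sum>k\<in>qbasis n W. cnj (\<psi> k) * \<phi> k)"

definition qnorm_sq :: "nat \<Rightarrow> nat \<Rightarrow> qstate \<Rightarrow> real" where
  "qnorm_sq n W \<psi> = (\<Sum>k\<in>qbasis n W. (cmod (\<psi> k))\<^sup>2)"

definition query_mass :: "nat \<Rightarrow> qstate \<Rightarrow> nat \<Rightarrow> nat \<Rightarrow> real" where
  "query_mass W \<psi> i j = (\<Sum>w<W. (cmod (\<psi> (i,j,0,w)))\<^sup>2 + (cmod (\<psi> (i,j,1,w)))\<^sup>2)"

lemma qbasis_eq: "qbasis n W = {..<n} \<times> {..<n} \<times> {..<2} \<times> {..<W}"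
  by (auto simp: qbasis_def)

lemma finite_qbasis [simp]: "finite (qbasis n W)"
  by (simp add: qbasis_eq)

lemma sum_qbasis:
  "(\<Sum>k\<in>qbasis n W. f k) = (\<Sum>i<n. \<Sum>j<n. \<Sum>w<W. f (i,j,0,w) + f (i,j,1,w))"
proof -
  have bits: "{..<2::nat} = {0,1}" by auto
  have "(\<Sum>k\<in>qbasis n W. f k) = (\<Sum>i<n. \<Sum>j<n. \<Sum>b<2. \<Sum>w<W. f (i,j,b,w))"
    by (simp add: qbasis_eq sum.cartesian_product)
  also have "\<dots> = (\<Sum>i<n. \<Sum>j<n. \<Sum>w<W. f (i,j,0,w) + f (i,j,1,w))"
    by (simp add: bits sum.distrib)
  finally show ?thesis .
qed

lemma qinner_self: "qinner n W \<psi> \<psi> = complex_of_real (qnorm_sq n W \<psi>)"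
  unfolding qinner_def qnorm_sq_def of_real_sum
  by (intro sum.cong refl) (metis complex_norm_square mult.commute)

lemma qinner_commute: "qinner n W \<psi> \<phi> = cnj (qinner n W \<phi> \<psi>)"
  by (simp add: qinner_def mult.commute)

lemma qnorm_sq_eq_sum_query_mass: "qnorm_sq n W \<psi> = (\<Sum>i<n. \<Sum>j<n. query_mass W \<psi> i j)"
  by (simp add: qnorm_sq_def query_mass_def sum_qbasis)

lemma query_mass_nonneg: "0 \<le> query_mass W \<psi> i j"
  by (simp add: query_mass_def sum_nonneg)

lemma qinner_apply_op:
  assumes "unitary_on (qbasis n W) U"
  shows "qinner n W (apply_op (qbasis n W) U \<psi>) (apply_op (qbasis n W) U \<phi>) = qinner n W \<psi> \<phi>"
proof -
  let ?B = "qbasis n W"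
  have "qinner n W (apply_op ?B U \<psi>) (apply_op ?B U \<phi>) =
      (\<Sum>k\<in>?B. \<Sum>l\<in>?B. \<Sum>m\<in>?B. cnj (\<psi> l) * \<phi> m * (cnj (U k l) * U k m))"
    by (simp add: qinner_def apply_op_def sum_distrib_left sum_distrib_right mult_ac)
  also have "\<dots> = (\<Sum>l\<in>?B. \<Sum>m\<in>?B. \<Sum>k\<in>?B. cnj (\<psi> l) * \<phi> m * (cnj (U k l) * U k m))"
    by (rule trans[OF sum.swap], rule sum.cong[OF refl], rule sum.swap)
  also have "\<dots> = (\<Sum>l\<in>?B. \<Sum>m\<in>?B. cnj (\<psi> l) * \<phi> m * (if l = m then 1 else 0))"
    using assms unfolding unitary_on_def by (simp add: sum_distrib_left[symmetric])
  also have "\<dots> = (\<Sum>l\<in>?B. \<Sum>m\<in>?B. if l = m then cnj (\<psi> l) * \<phi> m else 0)"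
    by (intro sum.cong refl) simp
  also have "\<dots> = qinner n W \<psi> \<phi>"
    by (simp add: qinner_def sum.delta)
  finally show ?thesis .
qed

lemma mult_le_weighted_sum_squares:
  fixes x y s :: real
  assumes "0 < s"
  shows "2 * (x * y) \<le> s * x\<^sup>2 + y\<^sup>2 / s"
proof -
  have "0 \<le> (s * x - y)\<^sup>2 / s" using assms by simp
  also have "\<dots> = s * x\<^sup>2 + y\<^sup>2 / s - 2 * (x * y)"
    using assms by (simp add: power2_eq_square field_simps)
  finally show ?thesis by simp
qed

lemma norm_diff_sq_le:
  fixes a b :: "'a::real_normed_vector"
  shows "(norm (a - b))\<^sup>2 \<le> 2 * ((norm a)\<^sup>2 + (norm b)\<^sup>2)"
proof -
  have "(norm (a - b))\<^sup>2 \<le> (norm a + norm b)\<^sup>2"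
    by (simp add: norm_triangle_ineq4 power_mono)
  also have "\<dots> \<le> 2 * ((norm a)\<^sup>2 + (norm b)\<^sup>2)"
    using mult_le_weighted_sum_squares[of 1 "norm a" "norm b"] by (simp add: power2_sum)
  finally show ?thesis .
qed

lemma norm_cnj_diff_mult_diff_le:
  fixes a0 a1 c0 c1 :: complex
  assumes "0 < s"
  shows "cmod (cnj (a1 - a0) * (c0 - c1))
    \<le> s * ((cmod a0)\<^sup>2 + (cmod a1)\<^sup>2) + ((cmod c0)\<^sup>2 + (cmod c1)\<^sup>2) / s"
proof -
  have "2 * cmod (cnj (a1 - a0) * (c0 - c1)) \<le> s * (cmod (a1 - a0))\<^sup>2 + (cmod (c0 - c1))\<^sup>2 / s"
    unfolding norm_mult complex_mod_cnj by (rule mult_le_weighted_sum_squares[OF assms])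
  also have "\<dots> \<le> s * (2 * ((cmod a1)\<^sup>2 + (cmod a0)\<^sup>2)) + 2 * ((cmod c0)\<^sup>2 + (cmod c1)\<^sup>2) / s"
    using assms norm_diff_sq_le[of a1 a0] norm_diff_sq_le[of c0 c1]
    by (intro add_mono mult_left_mono divide_right_mono) auto
  also have "\<dots> = 2 * (s * ((cmod a0)\<^sup>2 + (cmod a1)\<^sup>2) + ((cmod c0)\<^sup>2 + (cmod c1)\<^sup>2) / s)"
    by (simp add: algebra_simps)
  finally show ?thesis by (rule mult_left_le_imp_le) simp
qed

lemma qinner_query_gate_diff:
  "qinner n W (query_gate n W M \<psi>) (query_gate n W M' \<phi>) - qinner n W \<psi> \<phi> =
   (\<Sum>i<n. \<Sum>j<n. if M i j = M' i j then 0
      else \<Sum>w<W. cnj (\<psi> (i,j,1,w) - \<psi> (i,j,0,w)) * (\<phi> (i,j,0,w) - \<phi> (i,j,1,w)))"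
  unfolding qinner_def sum_qbasis sum_subtractf[symmetric]
  by (intro sum.cong refl) (auto simp: query_gate_def qbasis_def algebra_simps sum_subtractf)

lemma qinner_query_gate: "qinner n W (query_gate n W M \<psi>) (query_gate n W M \<phi>) = qinner n W \<psi> \<phi>"
  using qinner_query_gate_diff[of n W M \<psi> M \<phi>] by simp

lemma norm_qinner_query_gate_diff_le:
  assumes "\<And>i j. 0 < s i j"
  shows "cmod (qinner n W (query_gate n W M \<psi>) (query_gate n W M' \<phi>) - qinner n W \<psi> \<phi>)
    \<le> (\<Sum>i<n. \<Sum>j<n. if M i j = M' i j then 0
          else s i j * query_mass W \<psi> i j + query_mass W \<phi> i j / s i j)"
proof -
  have block: "cmod (\<Sum>w<W. cnj (\<psi> (i,j,1,w) - \<psi> (i,j,0,w)) * (\<phi> (i,j,0,w) - \<phi> (i,j,1,w)))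
      \<le> s i j * query_mass W \<psi> i j + query_mass W \<phi> i j / s i j" for i j
  proof -
    have "cmod (\<Sum>w<W. cnj (\<psi> (i,j,1,w) - \<psi> (i,j,0,w)) * (\<phi> (i,j,0,w) - \<phi> (i,j,1,w)))
        \<le> (\<Sum>w<W. s i j * ((cmod (\<psi> (i,j,0,w)))\<^sup>2 + (cmod (\<psi> (i,j,1,w)))\<^sup>2)
              + ((cmod (\<phi> (i,j,0,w)))\<^sup>2 + (cmod (\<phi> (i,j,1,w)))\<^sup>2) / s i j)"
      by (rule order_trans[OF norm_sum sum_mono], rule norm_cnj_diff_mult_diff_le[OF assms])
    also have "\<dots> = s i j * query_mass W \<psi> i j + query_mass W \<phi> i j / s i j"
      by (simp add: query_mass_def sum.distrib sum_distrib_left sum_divide_distrib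
          distrib_left add_divide_distrib)
    finally show ?thesis .
  qed
  show ?thesis
    unfolding qinner_query_gate_diff
    by (rule order_trans[OF norm_sum sum_mono], rule order_trans[OF norm_sum sum_mono])
      (use block in \<open>simp del: complex_cnj_diff\<close>)
qed

lemma prob_out_eq_sum:
  "prob_out n W \<psi> c = (\<Sum>k\<in>qbasis n W. if fst (snd (snd k)) = c then (cmod (\<psi> k))\<^sup>2 else 0)"
  unfolding prob_out_def by (rule sum.inter_filter) simp

lemma qnorm_sq_eq_prob_out: "qnorm_sq n W \<psi> = prob_out n W \<psi> 0 + prob_out n W \<psi> 1"
  unfolding qnorm_sq_def prob_out_eq_sum sum.distrib[symmetric]
  by (intro sum.cong refl) (auto simp: qbasis_def)

lemma Re_qinner_le_if_distinguished:
  assumes "qnorm_sq n W \<psi> = 1" "qnorm_sq n W \<phi> = 1"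
    and "2/3 \<le> prob_out n W \<psi> 0" "2/3 \<le> prob_out n W \<phi> 1"
  shows "Re (qinner n W \<psi> \<phi>) \<le> 17/18"
proof -
  let ?B = "qbasis n W"
  text \<open>Weights near the optimal \<open>1/\<surd>2\<close>, which would give \<open>2 \<surd>2 / 3 < 17/18\<close>.\<close>
  define wt :: "qidx \<Rightarrow> real" where "wt k = (if fst (snd (snd k)) = 0 then 7/10 else 10/7)" for k
  have "Re (qinner n W \<psi> \<phi>) \<le> (\<Sum>k\<in>?B. cmod (\<psi> k) * cmod (\<phi> k))"
    unfolding qinner_def
    by (rule order_trans[OF complex_Re_le_cmod order_trans[OF norm_sum]]) (simp add: norm_mult)
  also have "\<dots> \<le> (\<Sum>k\<in>?B. (wt k * (cmod (\<psi> k))\<^sup>2 + (cmod (\<phi> k))\<^sup>2 / wt k) / 2)"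
  proof (rule sum_mono)
    fix k
    have "0 < wt k" by (simp add: wt_def)
    from mult_le_weighted_sum_squares[OF this, of "cmod (\<psi> k)" "cmod (\<phi> k)"]
    show "cmod (\<psi> k) * cmod (\<phi> k) \<le> (wt k * (cmod (\<psi> k))\<^sup>2 + (cmod (\<phi> k))\<^sup>2 / wt k) / 2"
      by (simp add: field_simps)
  qed
  also have "\<dots> = 7/20 * prob_out n W \<psi> 0 + 5/7 * prob_out n W \<psi> 1
                  + 5/7 * prob_out n W \<phi> 0 + 7/20 * prob_out n W \<phi> 1"
    unfolding prob_out_eq_sum sum_distrib_left sum.distrib[symmetric]
    by (intro sum.cong refl) (auto simp: qbasis_def wt_def)
  also have "\<dots> \<le> 17/18"
    using assms qnorm_sq_eq_prob_out[of n W \<psi>] qnorm_sq_eq_prob_out[of n W \<phi>] by linarith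
  finally show ?thesis .
qed

lemma qnorm_sq_run:
  assumes "1 \<le> n" "1 \<le> W" and "\<And>s. s \<le> t \<Longrightarrow> unitary_on (qbasis n W) (U s)"
  shows "qnorm_sq n W (run n W U M t) = 1"
proof -
  have "qinner n W (run n W U M t) (run n W U M t) = 1"
    using assms(3)
  proof (induction t)
    case 0
    have "(0,0,0,0) \<in> qbasis n W" using assms(1,2) by (simp add: qbasis_def)
    then have "qinner n W init_state init_state = 1"
      unfolding qinner_def init_state_def by (simp add: if_distrib sum.delta cong: if_cong)
    then show ?case using 0 by (simp add: qinner_apply_op)
  next
    case (Suc t)
    then show ?case by (simp add: qinner_apply_op qinner_query_gate)
  qed
  then show ?thesis by (simp add: qinner_self)
qed

lemma perm_matrix_compose_transpose_diff:
  assumes "perm_matrix x i j \<noteq> perm_matrix (x \<circ> Transposition.transpose a b) i j"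
  shows "i \<in> {a, b} \<and> j \<in> {x a, x b}"
  using assms by (auto simp: perm_matrix_def Transposition.transpose_def split: if_splits)

definition swap_weight :: "real \<Rightarrow> (nat \<Rightarrow> nat \<Rightarrow> real) \<Rightarrow> (nat \<Rightarrow> nat) \<Rightarrow> nat \<Rightarrow> nat \<Rightarrow> real" where
  "swap_weight r P x a b = (P a (x a) + P b (x b)) / r + r * (P a (x b) + P b (x a))"

lemma swap_weight_nonneg: "0 < r \<Longrightarrow> (\<And>i j. 0 \<le> P i j) \<Longrightarrow> 0 \<le> swap_weight r P x a b"
  by (simp add: swap_weight_def)

lemma Re_qinner_drop_le_swap_weight:
  assumes V: "unitary_on (qbasis n W) V" and x: "x permutes {..<n}"
    and ab: "a < n" "b < n" and r: "0 < r"
  defines "y \<equiv> x \<circ> Transposition.transpose a b"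
  shows "Re (qinner n W \<psi> \<phi>)
       - Re (qinner n W (apply_op (qbasis n W) V (query_gate n W (perm_matrix x) \<psi>))
                        (apply_op (qbasis n W) V (query_gate n W (perm_matrix y) \<phi>)))
     \<le> swap_weight r (query_mass W \<psi>) x a b + swap_weight r (query_mass W \<phi>) y a b"
    (is "?L \<le> ?R")
proof (cases "a = b")
  case True
  then have "?L = 0" by (simp add: y_def qinner_apply_op[OF V] qinner_query_gate)
  then show ?thesis using r by (simp add: swap_weight_nonneg query_mass_nonneg)
next
  case False
  define s where "s i j = (if x i = j then 1 / r else r)" for i j
  define g where "g i j = s i j * query_mass W \<psi> i j + query_mass W \<phi> i j / s i j" for i j
  have s_pos: "0 < s i j" for i j using r by (simp add: s_def)
  have g_nonneg: "0 \<le> g i j" for i j using s_pos[of i j] by (simp add: g_def query_mass_nonneg)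
  have xab: "x a \<noteq> x b" using False permutes_inj[OF x] by (auto dest: injD)
  have xab_lt: "x a < n" "x b < n" using permutes_in_image[OF x] ab by auto
  let ?Q = "\<lambda>\<pi> \<chi>. query_gate n W (perm_matrix \<pi>) \<chi>"
  let ?f = "\<lambda>(i,j). if perm_matrix x i j = perm_matrix y i j then 0 else g i j"
  have outside: "?f (i,j) = 0" if "(i,j) \<notin> {a,b} \<times> {x a, x b}" for i j
    using that perm_matrix_compose_transpose_diff[of x i j a b] by (auto simp: y_def)
  have "?L = Re (qinner n W \<psi> \<phi> - qinner n W (?Q x \<psi>) (?Q y \<phi>))"
    by (simp add: qinner_apply_op[OF V])
  also have "\<dots> \<le> cmod (qinner n W (?Q x \<psi>) (?Q y \<phi>) - qinner n W \<psi> \<phi>)"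
    by (metis complex_Re_le_cmod norm_minus_commute)
  also have "\<dots> \<le> (\<Sum>i<n. \<Sum>j<n. ?f (i,j))"
    unfolding g_def by (simp add: norm_qinner_query_gate_diff_le[OF s_pos])
  also have "\<dots> = (\<Sum>(i,j)\<in>{a,b} \<times> {x a, x b}. ?f (i,j))"
    unfolding sum.cartesian_product using ab xab_lt outside
    by (intro sum.mono_neutral_right) fastforce+
  also have "\<dots> \<le> (\<Sum>(i,j)\<in>{a,b} \<times> {x a, x b}. g i j)"
    using g_nonneg by (intro sum_mono) auto
  also have "\<dots> = ?R"
    using False xab r
    by (simp add: sum.cartesian_product[symmetric] g_def s_def swap_weight_def y_def field_simps)
  finally show ?thesis .
qed

lemma sum_swap_weight_le:
  fixes P :: "nat \<Rightarrow> nat \<Rightarrow> real"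
  assumes x: "x permutes {..<n}" and P_nonneg: "\<And>i j. 0 \<le> P i j"
    and P_sum: "(\<Sum>i<n. \<Sum>j<n. P i j) = 1" and r: "0 < r" "r\<^sup>2 = real n"
  shows "(\<Sum>a<n. \<Sum>b<n. swap_weight r P x a b) \<le> 4 * r"
proof -
  define S where "S = (\<Sum>a<n. P a (x a))"
  have reindex: "(\<Sum>b<n. f (x b)) = (\<Sum>j<n. f j)" for f :: "nat \<Rightarrow> real"
    using sum.reindex_bij_betw[OF permutes_imp_bij[OF x]] .
  have "S \<le> (\<Sum>a<n. \<Sum>j<n. P a j)"
    unfolding S_def using permutes_in_image[OF x]
    by (intro sum_mono member_le_sum) (auto simp: P_nonneg)
  then have S_le: "S \<le> 1" using P_sum by simp
  have cross: "(\<Sum>a<n. \<Sum>b<n. P a (x b)) = 1" using P_sum by (simp add: reindex)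
  have cross': "(\<Sum>a<n. \<Sum>b<n. P b (x a)) = 1" using cross by (subst sum.swap) simp
  have "(\<Sum>a<n. \<Sum>b<n. swap_weight r P x a b) = 2 * real n * S / r + 2 * r"
    by (simp add: swap_weight_def sum.distrib sum_distrib_left[symmetric] add_divide_distrib
        sum_divide_distrib[symmetric] cross cross' S_def)
  also have "\<dots> \<le> 2 * real n / r + 2 * r"
    using S_le r by (intro add_right_mono divide_right_mono) (auto simp: mult_left_le)
  also have "\<dots> = 4 * r"
    using r by (simp add: power2_eq_square field_simps)
  finally show ?thesis .
qed

lemma Re_qinner_run_opposite_sign_le:
  assumes cs: "computes_sign n W T U" and n: "1 \<le> n"
    and x: "x permutes {..<n}" and y: "y permutes {..<n}" and sign: "sign y = - sign x"
  shows "Re (qinner n W (run n W U (perm_matrix x) T) (run n W U (perm_matrix y) T)) \<le> 17/18"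
proof -
  let ?\<psi> = "\<lambda>\<pi>. run n W U (perm_matrix \<pi>) T"
  have norm: "qnorm_sq n W (?\<psi> \<pi>) = 1" for \<pi>
    using cs n by (intro qnorm_sq_run) (auto simp: computes_sign_def)
  have out: "2/3 \<le> prob_out n W (?\<psi> \<pi>) (if sign \<pi> = 1 then 0 else 1)" if "\<pi> permutes {..<n}" for \<pi>
    using cs that by (simp add: computes_sign_def)
  show ?thesis
  proof (cases "sign x = 1")
    case True
    then show ?thesis
      using out[OF x] out[OF y] sign norm by (intro Re_qinner_le_if_distinguished) auto
  next
    case False
    then have "sign x = -1" by (auto simp: sign_def)
    then have "Re (qinner n W (?\<psi> y) (?\<psi> x)) \<le> 17/18"
      using out[OF x] out[OF y] sign norm by (intro Re_qinner_le_if_distinguished) auto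
    then show ?thesis by (subst qinner_commute) simp
  qed
qed

lemma sum_permutes_compose_transpose:
  fixes f :: "(nat \<Rightarrow> nat) \<Rightarrow> nat \<Rightarrow> nat \<Rightarrow> real"
  shows "(\<Sum>x | x permutes {..<n}. \<Sum>a<n. \<Sum>b<n. f (x \<circ> Transposition.transpose a b) a b)
       = (\<Sum>x | x permutes {..<n}. \<Sum>a<n. \<Sum>b<n. f x a b)"
proof -
  have swap: "(\<Sum>x\<in>S. \<Sum>a<n. \<Sum>b<n. g x a b) = (\<Sum>a<n. \<Sum>b<n. \<Sum>x\<in>S. g x a b)"
    for S and g :: "(nat \<Rightarrow> nat) \<Rightarrow> nat \<Rightarrow> nat \<Rightarrow> real"
    by (rule trans[OF sum.swap], rule sum.cong[OF refl], rule sum.swap)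
  have "(\<Sum>x | x permutes {..<n}. f (x \<circ> Transposition.transpose a b) a b)
      = (\<Sum>x | x permutes {..<n}. f x a b)" if "a < n" "b < n" for a b
    using that by (intro sum_permutations_compose_right[symmetric] permutes_swap_id) auto
  then show ?thesis unfolding swap by simp
qed

text \<open>The diagonal terms \<open>a = b\<close> compare a state with itself and only add a constant.\<close>

definition adv_progress :: "nat \<Rightarrow> nat \<Rightarrow> (nat \<Rightarrow> qop) \<Rightarrow> nat \<Rightarrow> real" where
  "adv_progress n W U t = (\<Sum>x | x permutes {..<n}. \<Sum>a<n. \<Sum>b<n.
     Re (qinner n W (run n W U (perm_matrix x) t)
                    (run n W U (perm_matrix (x \<circ> Transposition.transpose a b)) t)))"

lemma adv_progress_0:
  assumes "1 \<le> n" "1 \<le> W" "unitary_on (qbasis n W) (U 0)"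
  shows "adv_progress n W U 0 = real (card {x. x permutes {..<n}}) * (real n)\<^sup>2"
proof -
  have "Re (qinner n W (run n W U M 0) (run n W U M' 0)) = 1" for M M'
    using qnorm_sq_run[of n W 0 U M] assms by (simp add: qinner_self)
  then show ?thesis by (simp add: adv_progress_def power2_eq_square)
qed

lemma adv_progress_step:
  assumes n: "1 \<le> n" and W: "1 \<le> W" and unitary: "\<And>s. s \<le> Suc t \<Longrightarrow> unitary_on (qbasis n W) (U s)"
  shows "adv_progress n W U t - adv_progress n W U (Suc t)
    \<le> 8 * sqrt (real n) * real (card {x. x permutes {..<n}})"
proof -
  define Sn where "Sn = {x. x permutes {..<n}}"
  define r where "r = sqrt (real n)"
  define \<psi> where "\<psi> x = run n W U (perm_matrix x) t" for x
  define sw where "sw x a b = swap_weight r (query_mass W (\<psi> x)) x a b" for x a b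
  have r: "0 < r" "r\<^sup>2 = real n" using n by (simp_all add: r_def)
  have "adv_progress n W U t - adv_progress n W U (Suc t)
      \<le> (\<Sum>x\<in>Sn. \<Sum>a<n. \<Sum>b<n. sw x a b + sw (x \<circ> Transposition.transpose a b) a b)"
    unfolding adv_progress_def Sn_def sum_subtractf[symmetric]
    using unitary r(1)
    by (intro sum_mono) (simp add: sw_def \<psi>_def Re_qinner_drop_le_swap_weight)
  also have "\<dots> = 2 * (\<Sum>x\<in>Sn. \<Sum>a<n. \<Sum>b<n. sw x a b)"
    unfolding Sn_def sum.distrib sum_permutes_compose_transpose by simp
  also have "\<dots> \<le> 2 * (\<Sum>x\<in>Sn. 4 * r)"
  proof -
    have "(\<Sum>a<n. \<Sum>b<n. sw x a b) \<le> 4 * r" if "x \<in> Sn" for x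
      unfolding sw_def
    proof (rule sum_swap_weight_le[OF _ query_mass_nonneg _ r])
      show "x permutes {..<n}" using that by (simp add: Sn_def)
      show "(\<Sum>i<n. \<Sum>j<n. query_mass W (\<psi> x) i j) = 1"
        using qnorm_sq_run[OF n W, of t U] unitary
        by (simp add: \<psi>_def qnorm_sq_eq_sum_query_mass[symmetric])
    qed
    then show ?thesis by (simp add: sum_mono del: sum_constant)
  qed
  also have "\<dots> = 8 * sqrt (real n) * real (card {x. x permutes {..<n}})"
    by (simp add: Sn_def r_def)
  finally show ?thesis .
qed

lemma adv_progress_final:
  assumes cs: "computes_sign n W T U" and n: "1 \<le> n"
  shows "adv_progress n W U T \<le> real (card {x. x permutes {..<n}}) * real n * (17/18 * real n + 1/18)"
proof -
  have term_le: "Re (qinner n W (run n W U (perm_matrix x) T)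
                    (run n W U (perm_matrix (x \<circ> Transposition.transpose a b)) T))
      \<le> 17/18 + (if a = b then 1/18 else 0)"
    if x: "x permutes {..<n}" and ab: "a < n" "b < n" for x a b
  proof (cases "a = b")
    case True
    then show ?thesis
      using cs n qnorm_sq_run[of n W T U] by (simp add: qinner_self computes_sign_def)
  next
    case False
    have "permutation x" using x by (simp add: permutes_imp_permutation[of "{..<n}"])
    then have sign: "sign (x \<circ> Transposition.transpose a b) = - sign x"
      using False by (simp add: sign_compose permutation_swap_id sign_swap_id)
    have "x \<circ> Transposition.transpose a b permutes {..<n}"
      using ab by (intro permutes_compose[OF _ x] permutes_swap_id) auto
    with Re_qinner_run_opposite_sign_le[OF cs n x _ sign] False show ?thesis by simp
  qed
  have row: "(\<Sum>b<n. 17/18 + (if a = b then 1/18 else 0)) = 17/18 * real n + 1/18" if "a < n" for a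
    using that by (simp add: sum.distrib)
  have "adv_progress n W U T
      \<le> (\<Sum>x | x permutes {..<n}. \<Sum>a<n. \<Sum>b<n. 17/18 + (if a = b then 1/18 else 0))"
    unfolding adv_progress_def by (intro sum_mono term_le) auto
  also have "\<dots> = real (card {x. x permutes {..<n}}) * real n * (17/18 * real n + 1/18)"
    by (simp add: row)
  finally show ?thesis .
qed

lemma sign_query_lower_bound:
  assumes cs: "computes_sign n W T U" and n: "1 \<le> n"
  shows "sqrt (real n) * (real n - 1) \<le> 144 * real T"
proof -
  define N where "N = real (card {x. x permutes {..<n}})"
  have N: "0 < N"
    unfolding N_def using finite_permutations[of "{..<n}"] permutes_id[of "{..<n}"]
    by (auto simp: card_gt_0_iff intro!: exI[of _ id])
  have W: "1 \<le> W" and unitary: "\<And>t. t \<le> T \<Longrightarrow> unitary_on (qbasis n W) (U t)"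
    using cs by (auto simp: computes_sign_def)
  have "adv_progress n W U 0 - adv_progress n W U T
      = (\<Sum>t<T. adv_progress n W U t - adv_progress n W U (Suc t))"
    by (rule sum_lessThan_telescope'[symmetric])
  also have "\<dots> \<le> real T * (8 * sqrt (real n) * N)"
  proof -
    have "adv_progress n W U t - adv_progress n W U (Suc t) \<le> 8 * sqrt (real n) * N" if "t < T" for t
      unfolding N_def using n W unitary that by (intro adv_progress_step) auto
    then have "(\<Sum>t<T. adv_progress n W U t - adv_progress n W U (Suc t))
        \<le> of_nat (card {..<T}) * (8 * sqrt (real n) * N)"
      by (intro sum_bounded_above) simp
    then show ?thesis by simp
  qed
  finally have "N * (real n * (real n - 1)) \<le> N * (144 * sqrt (real n) * real T)"
    using adv_progress_0[of n W U] adv_progress_final[OF cs] n W unitary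
    by (simp add: N_def algebra_simps power2_eq_square)
  then have "sqrt (real n) * (sqrt (real n) * (real n - 1)) \<le> sqrt (real n) * (144 * real T)"
    using N by (simp add: mult.assoc[symmetric])
  then show ?thesis using n by simp
qed

theorem mainTheorem10:
  shows "\<exists>c>0. \<exists>N0. \<forall>n\<ge>N0. \<forall>W T U. computes_sign n W T U \<longrightarrow>
           real T \<ge> c * real n powr (3/2)"
proof (intro exI[of _ "1/288"] conjI exI[of _ "2::nat"] allI impI)
  fix n :: nat and W T U
  assume n: "2 \<le> n" and cs: "computes_sign n W T U"
  have "real n powr (3/2) = real n powr (1 + 1/2)" by simp
  also have "\<dots> = real n * sqrt (real n)"
    by (subst powr_add) (simp add: powr_half_sqrt)
  also have "\<dots> \<le> 2 * (sqrt (real n) * (real n - 1))"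
    using n by (simp add: mult_right_mono)
  also have "\<dots> \<le> 288 * real T"
    using sign_query_lower_bound[OF cs] n by simp
  finally show "1/288 * real n powr (3/2) \<le> real T" by simp
qed simp

end
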